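(* Let $A$ be a self-adjoint operator with form $\mathfrak a$ and let $\alpha,\beta\in\mathbb R$ with $(\alpha,\beta)\subset\rho(A)$. Let $\mathfrak b$ be a non-negative quadratic form with $\mathrm{dom}(\mathfrak b)\supset\mathrm{dom}(\mathfrak a)$ such that $\mathfrak a+\mathfrak b$ with domain $\mathrm{dom}(\mathfrak a)$ is the form (in the sense below) of a self-adjoint operator $C$, and assume there are constants $c,d\ge0$ with $$\mathfrak b[x]\le c\|x\|^2+d\,\mathfrak a[x],\qquad x\in\mathrm{dom}(\mathfrak a).$$ If $\hat\alpha:=\alpha+c+d\alpha<\beta$, then $(\hat\alpha,\beta)\subset\rho(C)$.
   Context: For a self-adjoint operator $A$ with spectral measure $E$, its form is $\mathfrak a[x,y]=\int_{\mathbb R}\mu\,d\langle E(\mu)x,y\rangle$ for $x,y\in\mathrm{dom}(\mathfrak a):=\mathrm{dom}(|A|^{1/2})$, $\mathfrak a[x]:=\mathfrak a[x,x]$; the form of $C$ is defined in the same way from the spectral measure of $C$. *)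

theory Defs
  imports "HOL-Analysis.Analysis"
begin

text \<open>Operators are partial maps on a real Hilbert space: a domain D and a function A,
  only the values on D being relevant.\<close>

definition linear_operator :: "'a::real_inner set \<Rightarrow> ('a \<Rightarrow> 'a) \<Rightarrow> bool" where
  "linear_operator D A \<longleftrightarrow> subspace D \<and>
     (\<forall>x\<in>D. \<forall>y\<in>D. A (x + y) = A x + A y) \<and> (\<forall>x\<in>D. \<forall>r. A (r *\<^sub>R x) = r *\<^sub>R A x)"

definition self_adjoint :: "'a::real_inner set \<Rightarrow> ('a \<Rightarrow> 'a) \<Rightarrow> bool" where
  "self_adjoint D A \<longleftrightarrow> linear_operator D A \<and> closure D = UNIV \<and>
     (\<forall>y z. (\<forall>x\<in>D. inner (A x) y = inner x z) \<longleftrightarrow> (y \<in> D \<and> z = A y))"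

definition real_resolvent_set :: "'a::real_normed_vector set \<Rightarrow> ('a \<Rightarrow> 'a) \<Rightarrow> real set" where
  "real_resolvent_set D A = {l. bij_betw (\<lambda>x. A x - l *\<^sub>R x) D UNIV \<and>
       (\<exists>K. \<forall>x\<in>D. norm x \<le> K * norm (A x - l *\<^sub>R x))}"

definition pvm :: "(real set \<Rightarrow> 'a::real_inner \<Rightarrow> 'a) \<Rightarrow> bool" where
  "pvm E \<longleftrightarrow>
     (\<forall>S\<in>sets (borel :: real measure). bounded_linear (E S) \<and>
        (\<forall>x y. inner (E S x) y = inner x (E S y)) \<and> E S \<circ> E S = E S) \<and>
     E UNIV = id \<and>
     (\<forall>S\<in>sets (borel :: real measure). \<forall>T\<in>sets (borel :: real measure).
        E (S \<inter> T) = E S \<circ> E T) \<and>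
     (\<forall>F. range F \<subseteq> sets (borel :: real measure) \<longrightarrow> disjoint_family F \<longrightarrow>
        (\<forall>x. (\<lambda>n. E (F n) x) sums E (\<Union>n. F n) x))"

definition spec_meas :: "(real set \<Rightarrow> 'a::real_inner \<Rightarrow> 'a) \<Rightarrow> 'a \<Rightarrow> real measure" where
  "spec_meas E x = measure_of UNIV (sets borel) (\<lambda>S. ennreal ((norm (E S x))\<^sup>2))"

text \<open>Domain of the form: dom(|A|^{1/2}) = {x. \<integral> |\<mu>| d<E(\<mu>)x,x> < \<infinity>}.\<close>
definition form_dom :: "(real set \<Rightarrow> 'a::real_inner \<Rightarrow> 'a) \<Rightarrow> 'a set" where
  "form_dom E = {x. integrable (spec_meas E x) (\<lambda>\<mu>. \<bar>\<mu>\<bar>)}"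

text \<open>The form \<integral> \<mu> d<E(\<mu>)x,y>, the signed measure <E(.)x,y> written via polarization.\<close>
definition spec_form :: "(real set \<Rightarrow> 'a::real_inner \<Rightarrow> 'a) \<Rightarrow> 'a \<Rightarrow> 'a \<Rightarrow> real" where
  "spec_form E x y = (integral\<^sup>L (spec_meas E (x + y)) (\<lambda>\<mu>. \<mu>)
                      - integral\<^sup>L (spec_meas E (x - y)) (\<lambda>\<mu>. \<mu>)) / 4"

definition spectral_measure_of ::
    "(real set \<Rightarrow> 'a::real_inner \<Rightarrow> 'a) \<Rightarrow> 'a set \<Rightarrow> ('a \<Rightarrow> 'a) \<Rightarrow> bool" where
  "spectral_measure_of E D A \<longleftrightarrow> pvm E \<and>
     D = {x. integrable (spec_meas E x) (\<lambda>\<mu>. \<mu>\<^sup>2)} \<and>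
     (\<forall>x\<in>D. \<forall>y\<in>form_dom E. inner (A x) y = spec_form E x y)"

definition nonneg_form :: "'a::real_vector set \<Rightarrow> ('a \<Rightarrow> 'a \<Rightarrow> real) \<Rightarrow> bool" where
  "nonneg_form Db b \<longleftrightarrow> subspace Db \<and>
     (\<forall>x\<in>Db. \<forall>y\<in>Db. \<forall>z\<in>Db. b (x + y) z = b x z + b y z) \<and>
     (\<forall>x\<in>Db. \<forall>y\<in>Db. \<forall>r. b (r *\<^sub>R x) y = r * b x y) \<and>
     (\<forall>x\<in>Db. \<forall>y\<in>Db. b x y = b y x) \<and>
     (\<forall>x\<in>Db. b x x \<ge> 0)"

end

theory Submission
  imports Defs
begin

text \<open>The spectral measure E of A vanishes on the gap: if l is a resolvent point, then on the
  range of E(l - e, l + e) the form of A differs from l times the inner product by at most e, so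
  A - l maps that range into itself with norm at most e, which for small e is incompatible with
  the resolvent bound unless the range is trivial; Lindeloef's theorem covers the whole gap.
  For x in dom C put x1 = E(-oo, alpha] x and x2 = E(alpha, oo) x, so x2 has spectrum in
  [beta, oo). Testing C - l against x2 - x1 and using that the form of C is a + b with
  b[x2] >= 0 and b[x1] <= (c + d alpha) |x1|^2 gives
  <(C - l) x, x2 - x1> >= min (beta - l, l - alpha') |x|^2, where alpha' = alpha + c + d alpha.
  Since |x2 - x1| = |x|, C - l is bounded below, and a self-adjoint operator bounded below has
  closed range with trivial orthogonal complement, hence is bijective.\<close>

lemma norm_add_squared:
  fixes a b :: "'a::real_inner"
  shows "(norm (a + b))\<^sup>2 = (norm a)\<^sup>2 + 2 * inner a b + (norm b)\<^sup>2"
  by (simp add: power2_norm_eq_inner inner_add_left inner_add_right inner_commute)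

lemma norm_diff_squared:
  fixes a b :: "'a::real_inner"
  shows "(norm (a - b))\<^sup>2 = (norm a)\<^sup>2 - 2 * inner a b + (norm b)\<^sup>2"
  by (simp add: power2_norm_eq_inner inner_diff_left inner_diff_right inner_commute)

lemma parallelogram_law:
  fixes a b :: "'a::real_inner"
  shows "(norm (a + b))\<^sup>2 + (norm (a - b))\<^sup>2 = 2 * (norm a)\<^sup>2 + 2 * (norm b)\<^sup>2"
  by (simp add: norm_add_squared norm_diff_squared)

lemma norm_add_eq_norm_diff_if_orthogonal:
  fixes a b :: "'a::real_inner"
  assumes "inner a b = 0"
  shows "norm (a + b) = norm (a - b)"
proof -
  have "(norm (a + b))\<^sup>2 = (norm (a - b))\<^sup>2"
    using assms by (simp add: norm_add_squared norm_diff_squared)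
  thus ?thesis by (simp add: power2_eq_iff_nonneg)
qed

lemma inner_add_diff_orthogonal:
  fixes a b :: "'a::real_inner"
  assumes "inner a b = 0"
  shows "inner (a + b) (b - a) = (norm b)\<^sup>2 - (norm a)\<^sup>2"
  using assms by (simp add: power2_norm_eq_inner inner_add_left inner_diff_right inner_commute[of b a])

lemma dense_orthogonal_eq_0:
  fixes a :: "'a::real_inner"
  assumes "closure D = UNIV" "\<And>w. w \<in> D \<Longrightarrow> inner a w = 0"
  shows "a = 0"
proof -
  have "closure D \<subseteq> {w. inner a w = 0}"
    using assms(2) closed_hyperplane[of a 0] by (intro closure_minimal) auto
  hence "inner a a = 0" using assms(1) by blast
  thus ?thesis by simp
qed

lemma dist_squared_le_of_near_minimal:
  fixes f :: "'a::real_inner"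
  assumes "convex S" "a \<in> S" "b \<in> S" "\<And>y. y \<in> S \<Longrightarrow> d \<le> (norm (f - y))\<^sup>2"
  shows "(norm (a - b))\<^sup>2 \<le> 2 * ((norm (f - a))\<^sup>2 - d) + 2 * ((norm (f - b))\<^sup>2 - d)"
proof -
  have "(1/2) *\<^sub>R a + (1/2) *\<^sub>R b \<in> S"
    using assms(1-3) by (rule convexD) auto
  hence "d \<le> (norm (f - ((1/2) *\<^sub>R a + (1/2) *\<^sub>R b)))\<^sup>2" by (rule assms(4))
  also have "(f - a) + (f - b) = 2 *\<^sub>R (f - ((1/2) *\<^sub>R a + (1/2) *\<^sub>R b))"
    by (simp add: algebra_simps scaleR_2)
  hence "4 * (norm (f - ((1/2) *\<^sub>R a + (1/2) *\<^sub>R b)))\<^sup>2 = (norm ((f - a) + (f - b)))\<^sup>2"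
    by (simp add: power_mult_distrib)
  moreover have "(f - a) - (f - b) = b - a" by simp
  ultimately show ?thesis
    using parallelogram_law[of "f - a" "f - b"] by (simp add: norm_minus_commute)
qed

lemma Cauchy_if_near_minimal:
  fixes f :: "'a::real_inner"
  assumes "convex S" "\<And>n. r n \<in> S" "\<And>y. y \<in> S \<Longrightarrow> d \<le> (norm (f - y))\<^sup>2"
    and near: "\<And>n. (norm (f - r n))\<^sup>2 < d + 1 / (real n + 1)"
  shows "Cauchy r"
proof (rule metric_CauchyI)
  fix e :: real assume e: "0 < e"
  obtain M :: nat where M: "4 / e\<^sup>2 < real M" using reals_Archimedean2 by blast
  have "dist (r m) (r n) < e" if "M \<le> m" "M \<le> n" for m n
  proof -
    have bound: "2 / (real k + 1) \<le> 2 / (real M + 1)" if "M \<le> k" for k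
      using that by (intro divide_left_mono) auto
    have "(norm (r m - r n))\<^sup>2 \<le> 4 / (real M + 1)"
      using dist_squared_le_of_near_minimal[OF assms(1) assms(2) assms(2) assms(3), of m n]
        near[of m] near[of n] bound[OF \<open>M \<le> m\<close>] bound[OF \<open>M \<le> n\<close>] by simp
    also have "\<dots> < e\<^sup>2"
    proof -
      have "4 < real M * e\<^sup>2" using M e by (simp add: divide_less_eq)
      also have "\<dots> < (real M + 1) * e\<^sup>2" using e by simp
      finally show ?thesis by (simp add: divide_less_eq mult.commute)
    qed
    finally show ?thesis using e by (simp add: dist_norm power_less_imp_less_base)
  qed
  thus "\<exists>M. \<forall>m\<ge>M. \<forall>n\<ge>M. dist (r m) (r n) < e" by blast
qed

lemma closed_convex_has_closest_point:
  fixes S :: "'a::{real_inner,complete_space} set"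
  assumes "closed S" "convex S" "S \<noteq> {}"
  obtains r where "r \<in> S" "\<And>y. y \<in> S \<Longrightarrow> norm (f - r) \<le> norm (f - y)"
proof -
  define d where "d = (INF y\<in>S. (norm (f - y))\<^sup>2)"
  have bdd: "bdd_below ((\<lambda>y. (norm (f - y))\<^sup>2) ` S)" by (rule bdd_belowI[where m=0]) auto
  have d_le: "d \<le> (norm (f - y))\<^sup>2" if "y \<in> S" for y
    unfolding d_def using bdd that by (rule cINF_lower)
  have "\<exists>y\<in>S. (norm (f - y))\<^sup>2 < d + 1 / (real n + 1)" for n
    using cINF_less_iff[OF assms(3) bdd, of "d + 1 / (real n + 1)"] by (simp add: d_def)
  then obtain r where rS: "\<And>n. r n \<in> S" and near: "\<And>n. (norm (f - r n))\<^sup>2 < d + 1 / (real n + 1)"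
    by metis
  have "Cauchy r" using assms(2) rS d_le near by (rule Cauchy_if_near_minimal)
  then obtain r0 where lim: "r \<longlonglongrightarrow> r0" using Cauchy_convergent_iff convergent_def by blast
  have "r0 \<in> S" using closed_sequentially[OF assms(1)] rS lim by blast
  moreover have "(norm (f - r0))\<^sup>2 \<le> d"
  proof (rule LIMSEQ_le[where X="\<lambda>n. (norm (f - r n))\<^sup>2"])
    show "(\<lambda>n. (norm (f - r n))\<^sup>2) \<longlonglongrightarrow> (norm (f - r0))\<^sup>2" using lim by (intro tendsto_intros)
    have "(\<lambda>n. 1 / (real n + 1)) \<longlonglongrightarrow> 0"
      using LIMSEQ_inverse_real_of_nat by (simp add: inverse_eq_divide add.commute)
    from tendsto_add[OF tendsto_const this]
    show "(\<lambda>n. d + 1 / (real n + 1)) \<longlonglongrightarrow> d" by simp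
  qed (use near less_imp_le in blast)
  ultimately show ?thesis
    using that d_le by (meson order_trans power2_le_imp_le norm_ge_zero)
qed

lemma closest_point_orthogonal:
  fixes S :: "'a::real_inner set"
  assumes "subspace S" "r \<in> S" "\<And>y. y \<in> S \<Longrightarrow> norm (f - r) \<le> norm (f - y)" "y \<in> S"
  shows "inner (f - r) y = 0"
proof -
  define p where "p = inner (f - r) y"
  have "2 * t * p \<le> t\<^sup>2 * (norm y)\<^sup>2" for t
  proof -
    have "r + t *\<^sub>R y \<in> S" using assms by (intro subspace_add subspace_scale) auto
    hence "norm (f - r) \<le> norm ((f - r) - t *\<^sub>R y)" using assms(3) by (simp add: algebra_simps)
    hence "(norm (f - r))\<^sup>2 \<le> (norm ((f - r) - t *\<^sub>R y))\<^sup>2" by (simp add: power_mono)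
    thus ?thesis by (simp add: norm_diff_squared p_def power_mult_distrib)
  qed
  from this[of "p / (norm y)\<^sup>2"] have "2 * p\<^sup>2 \<le> p\<^sup>2" if "y \<noteq> 0"
    using that by (simp add: power2_eq_square field_simps)
  thus ?thesis by (cases "y = 0") (auto simp: p_def)
qed

lemma closed_subspace_eq_UNIV_if_orthogonal_trivial:
  fixes R :: "'a::{real_inner,complete_space} set"
  assumes "closed R" "subspace R" "\<And>g. (\<And>y. y \<in> R \<Longrightarrow> inner g y = 0) \<Longrightarrow> g = 0"
  shows "R = UNIV"
proof -
  have "f \<in> R" for f
  proof -
    obtain r where r: "r \<in> R" "\<And>y. y \<in> R \<Longrightarrow> norm (f - r) \<le> norm (f - y)"
      using closed_convex_has_closest_point[OF assms(1) subspace_imp_convex[OF assms(2)]]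
        subspace_0[OF assms(2)] by blast
    have "f - r = 0" using closest_point_orthogonal[OF assms(2) r] assms(3) by blast
    thus ?thesis using r(1) by simp
  qed
  thus ?thesis by blast
qed

lemma linear_operator_diff:
  assumes "linear_operator D A" "x \<in> D" "y \<in> D"
  shows "A (x - y) = A x - A y"
proof -
  have D: "subspace D" and add: "\<forall>x\<in>D. \<forall>y\<in>D. A (x + y) = A x + A y"
    and scale: "\<forall>x\<in>D. \<forall>r. A (r *\<^sub>R x) = r *\<^sub>R A x"
    using assms(1) unfolding linear_operator_def by blast+
  have "(-1) *\<^sub>R y \<in> D" using D assms(3) by (rule subspace_scale)
  hence "A (x + (-1) *\<^sub>R y) = A x + A ((-1) *\<^sub>R y)" using add assms(2) by blast
  also have "A ((-1) *\<^sub>R y) = (-1) *\<^sub>R A y" using scale assms(3) by blast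
  finally show ?thesis by simp
qed

lemma linear_operator_shift:
  "linear_operator D A \<Longrightarrow> linear_operator D (\<lambda>x. A x - l *\<^sub>R x)"
  by (simp add: linear_operator_def algebra_simps)

lemma subspace_linear_operator_image:
  assumes "linear_operator D A"
  shows "subspace (A ` D)"
proof -
  have D: "subspace D" and add: "\<forall>x\<in>D. \<forall>y\<in>D. A (x + y) = A x + A y"
    and scale: "\<forall>x\<in>D. \<forall>r. A (r *\<^sub>R x) = r *\<^sub>R A x"
    using assms unfolding linear_operator_def by blast+
  have "A 0 = 0" using linear_operator_diff[OF assms subspace_0[OF D] subspace_0[OF D]] by simp
  hence "0 \<in> A ` D" using subspace_0[OF D] by (metis image_eqI)
  moreover have "A x + A y \<in> A ` D" if "x \<in> D" "y \<in> D" for x y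
    using add that subspace_add[OF D that] by (metis image_eqI)
  moreover have "r *\<^sub>R A x \<in> A ` D" if "x \<in> D" for x r
    using scale that subspace_scale[OF D that] by (metis image_eqI)
  ultimately show ?thesis unfolding subspace_def by blast
qed

lemma self_adjoint_inner_commute:
  "self_adjoint D A \<Longrightarrow> v \<in> D \<Longrightarrow> y \<in> D \<Longrightarrow> inner (A v) y = inner v (A y)"
  unfolding self_adjoint_def by blast

lemma self_adjoint_adjoint_eq:
  "self_adjoint D A \<Longrightarrow> (\<And>v. v \<in> D \<Longrightarrow> inner (A v) y = inner v z) \<Longrightarrow> y \<in> D \<and> A y = z"
  unfolding self_adjoint_def by metis

context
  fixes D :: "'a::{real_inner,complete_space} set" and A :: "'a \<Rightarrow> 'a" and l \<kappa> :: real
  assumes sa: "self_adjoint D A" and \<kappa>: "0 < \<kappa>"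
    and bounded_below: "\<And>x. x \<in> D \<Longrightarrow> \<kappa> * norm x \<le> norm (A x - l *\<^sub>R x)"
begin

lemma self_adjoint_bounded_below_diff:
  assumes "x \<in> D" "y \<in> D"
  shows "\<kappa> * norm (x - y) \<le> norm ((A x - l *\<^sub>R x) - (A y - l *\<^sub>R y))"
proof -
  have "linear_operator D A" using sa by (simp add: self_adjoint_def)
  hence xy: "x - y \<in> D" and "A (x - y) = A x - A y"
    using assms linear_operator_diff by (auto simp: linear_operator_def subspace_diff)
  hence "(A x - l *\<^sub>R x) - (A y - l *\<^sub>R y) = A (x - y) - l *\<^sub>R (x - y)"
    by (simp add: algebra_simps)
  thus ?thesis using bounded_below[OF xy] by simp
qed

lemma self_adjoint_bounded_below_inj: "inj_on (\<lambda>x. A x - l *\<^sub>R x) D"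
proof (rule inj_onI)
  fix x y assume "x \<in> D" "y \<in> D" "A x - l *\<^sub>R x = A y - l *\<^sub>R y"
  hence "\<kappa> * norm (x - y) \<le> 0" using self_adjoint_bounded_below_diff[of x y] by simp
  thus "x = y" using \<kappa> by (simp add: mult_le_0_iff)
qed

lemma self_adjoint_bounded_below_Cauchy:
  assumes "\<And>n. xs n \<in> D" "Cauchy (\<lambda>n. A (xs n) - l *\<^sub>R xs n)"
  shows "Cauchy xs"
proof (rule metric_CauchyI)
  fix e :: real assume "0 < e"
  then obtain M where M: "\<forall>m\<ge>M. \<forall>n\<ge>M. dist (A (xs m) - l *\<^sub>R xs m) (A (xs n) - l *\<^sub>R xs n) < \<kappa> * e"
    using metric_CauchyD[OF assms(2), of "\<kappa> * e"] \<kappa> by auto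
  have "dist (xs m) (xs n) < e" if "M \<le> m" "M \<le> n" for m n
  proof -
    have "\<kappa> * norm (xs m - xs n) \<le> dist (A (xs m) - l *\<^sub>R xs m) (A (xs n) - l *\<^sub>R xs n)"
      using self_adjoint_bounded_below_diff[OF assms(1) assms(1)] by (simp add: dist_norm)
    also have "\<dots> < \<kappa> * e" using M that by blast
    finally have "\<kappa> * norm (xs m - xs n) < \<kappa> * e" .
    thus ?thesis using \<kappa> by (simp add: dist_norm)
  qed
  thus "\<exists>M. \<forall>m\<ge>M. \<forall>n\<ge>M. dist (xs m) (xs n) < e" by blast
qed

lemma self_adjoint_bounded_below_closed_range: "closed ((\<lambda>x. A x - l *\<^sub>R x) ` D)"
  unfolding closed_sequential_limits
proof (intro allI impI, elim conjE)
  fix fs f assume "\<forall>n. fs n \<in> (\<lambda>x. A x - l *\<^sub>R x) ` D" and lim: "fs \<longlonglongrightarrow> f"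
  hence "\<forall>n. \<exists>x. x \<in> D \<and> fs n = A x - l *\<^sub>R x" by blast
  from choice[OF this] obtain xs where "\<forall>n. xs n \<in> D \<and> fs n = A (xs n) - l *\<^sub>R xs n" by blast
  hence xs: "\<And>n. xs n \<in> D" "\<And>n. fs n = A (xs n) - l *\<^sub>R xs n" by blast+
  have "fs = (\<lambda>n. A (xs n) - l *\<^sub>R xs n)" using xs(2) by (rule ext)
  hence "Cauchy xs"
    using LIMSEQ_imp_Cauchy[OF lim] self_adjoint_bounded_below_Cauchy[OF xs(1)] by simp
  then obtain x where xlim: "xs \<longlonglongrightarrow> x" using Cauchy_convergent_iff convergent_def by blast
  have "x \<in> D \<and> A x = f + l *\<^sub>R x"
  proof (rule self_adjoint_adjoint_eq[OF sa])
    fix v assume v: "v \<in> D"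
    show "inner (A v) x = inner v (f + l *\<^sub>R x)"
    proof (rule LIMSEQ_unique)
      show "(\<lambda>n. inner (A v) (xs n)) \<longlonglongrightarrow> inner (A v) x" using xlim by (intro tendsto_intros)
      have "inner (A v) (xs n) = inner v (fs n + l *\<^sub>R xs n)" for n
        using self_adjoint_inner_commute[OF sa v xs(1)]
        by (simp add: xs(2) inner_add_right inner_diff_right)
      moreover have "(\<lambda>n. inner v (fs n + l *\<^sub>R xs n)) \<longlonglongrightarrow> inner v (f + l *\<^sub>R x)"
        using xlim lim by (intro tendsto_intros)
      ultimately show "(\<lambda>n. inner (A v) (xs n)) \<longlonglongrightarrow> inner v (f + l *\<^sub>R x)" by simp
    qed
  qed
  thus "f \<in> (\<lambda>x. A x - l *\<^sub>R x) ` D" by (intro rev_image_eqI[of x]) auto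
qed

lemma self_adjoint_bounded_below_bij: "bij_betw (\<lambda>x. A x - l *\<^sub>R x) D UNIV"
proof -
  have "(\<lambda>x. A x - l *\<^sub>R x) ` D = UNIV"
  proof (rule closed_subspace_eq_UNIV_if_orthogonal_trivial)
    show "subspace ((\<lambda>x. A x - l *\<^sub>R x) ` D)"
      using sa by (simp add: subspace_linear_operator_image linear_operator_shift self_adjoint_def)
    fix g assume g_orth: "\<And>y. y \<in> (\<lambda>x. A x - l *\<^sub>R x) ` D \<Longrightarrow> inner g y = 0"
    have "inner g (A v - l *\<^sub>R v) = 0" if "v \<in> D" for v
      using that by (intro g_orth) auto
    hence "g \<in> D \<and> A g = l *\<^sub>R g"
      by (intro self_adjoint_adjoint_eq[OF sa]) (simp add: inner_commute inner_diff_right)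
    thus "g = 0" using bounded_below[of g] \<kappa> by (simp add: mult_le_0_iff)
  qed (rule self_adjoint_bounded_below_closed_range)
  thus ?thesis using self_adjoint_bounded_below_inj by (simp add: bij_betw_def)
qed

end

lemma nonneg_form_diff_left:
  assumes "nonneg_form Db b" "x \<in> Db" "y \<in> Db" "z \<in> Db"
  shows "b (x - y) z = b x z - b y z"
proof -
  have Db: "subspace Db" and add: "\<forall>x\<in>Db. \<forall>y\<in>Db. \<forall>z\<in>Db. b (x + y) z = b x z + b y z"
    and scale: "\<forall>x\<in>Db. \<forall>y\<in>Db. \<forall>r. b (r *\<^sub>R x) y = r * b x y"
    using assms(1) unfolding nonneg_form_def by blast+
  have "(-1) *\<^sub>R y \<in> Db" using Db assms(3) by (rule subspace_scale)
  hence "b (x + (-1) *\<^sub>R y) z = b x z + b ((-1) *\<^sub>R y) z" using add assms(2,4) by blast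
  also have "b ((-1) *\<^sub>R y) z = (-1) * b y z" using scale assms(3,4) by blast
  finally show ?thesis by simp
qed

lemma nonneg_form_add_diff:
  assumes b: "nonneg_form Db b" and "x \<in> Db" "y \<in> Db"
  shows "b (x + y) (y - x) = b y y - b x x"
proof -
  have Db: "subspace Db" and add: "\<forall>x\<in>Db. \<forall>y\<in>Db. \<forall>z\<in>Db. b (x + y) z = b x z + b y z"
    and sym: "\<forall>x\<in>Db. \<forall>y\<in>Db. b x y = b y x"
    using b unfolding nonneg_form_def by blast+
  have "y - x \<in> Db" using Db assms(3,2) by (rule subspace_diff)
  hence "b (x + y) (y - x) = b (y - x) x + b (y - x) y" using add sym assms(2,3) by simp
  also have "\<dots> = b y y - b x x"
    using nonneg_form_diff_left[OF b] sym assms(2,3) by simp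
  finally show ?thesis .
qed

locale projection_valued_measure =
  fixes E :: "real set \<Rightarrow> 'a::real_inner \<Rightarrow> 'a"
  assumes pvm: "pvm E"
begin

lemma E_bounded_linear: "S \<in> sets borel \<Longrightarrow> bounded_linear (E S)"
  using pvm unfolding pvm_def by blast

lemma E_inner_commute: "S \<in> sets borel \<Longrightarrow> inner (E S x) y = inner x (E S y)"
  using pvm unfolding pvm_def by blast

lemma E_UNIV [simp]: "E UNIV x = x"
  using pvm unfolding pvm_def by simp

lemma E_Int: "S \<in> sets borel \<Longrightarrow> T \<in> sets borel \<Longrightarrow> E (S \<inter> T) x = E S (E T x)"
  using pvm unfolding pvm_def by simp

lemma E_idem: "S \<in> sets borel \<Longrightarrow> E S (E S x) = E S x"
  using E_Int[of S S x] by simp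

lemma E_sums:
  "range F \<subseteq> sets borel \<Longrightarrow> disjoint_family F \<Longrightarrow> (\<lambda>n. E (F n) x) sums E (\<Union>n. F n) x"
  using pvm unfolding pvm_def by blast

lemma E_add: "S \<in> sets borel \<Longrightarrow> E S (x + y) = E S x + E S y"
  using linear_add[OF bounded_linear.linear[OF E_bounded_linear]] .

lemma E_diff: "S \<in> sets borel \<Longrightarrow> E S (x - y) = E S x - E S y"
  using linear_diff[OF bounded_linear.linear[OF E_bounded_linear]] .

lemma E_scaleR: "S \<in> sets borel \<Longrightarrow> E S (r *\<^sub>R x) = r *\<^sub>R E S x"
  using linear_scale[OF bounded_linear.linear[OF E_bounded_linear]] .

lemma E_empty [simp]: "E {} x = 0"
proof -
  have "(\<lambda>n. E {} x) sums E (\<Union>n. {}) x"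
    using E_sums[of "\<lambda>n. {}"] by (simp add: disjoint_family_on_def)
  hence "(\<lambda>n. E {} x) \<longlonglongrightarrow> 0" by (metis sums_summable summable_LIMSEQ_zero)
  thus ?thesis by (simp add: LIMSEQ_const_iff)
qed

lemma E_add_E_Compl:
  assumes "S \<in> sets borel"
  shows "E S x + E (-S) x = x"
proof -
  define F where "F = (\<lambda>n::nat. if n = 0 then S else if n = 1 then -S else {})"
  have F: "range F \<subseteq> sets borel" "disjoint_family F"
    using assms by (auto simp: F_def disjoint_family_on_def)
  have "(\<Union>n. F n) = UNIV"
  proof -
    have "m \<in> F 0 \<or> m \<in> F 1" for m by (auto simp: F_def)
    thus ?thesis by blast
  qed
  hence "(\<lambda>n. E (F n) x) sums x" using E_sums[OF F, of x] by simp
  moreover have "(\<lambda>n. E (F n) x) sums (\<Sum>n\<in>{0,1}. E (F n) x)"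
    by (rule sums_finite) (auto simp: F_def)
  ultimately show ?thesis by (simp add: F_def sums_unique2)
qed

lemma inner_E_E:
  assumes "S \<in> sets borel" "T \<in> sets borel"
  shows "inner (E S x) (E T y) = inner (E (S \<inter> T) x) y"
proof -
  have "inner (E S x) (E T y) = inner x (E (S \<inter> T) y)"
    using assms by (simp add: E_inner_commute E_Int)
  also have "\<dots> = inner (E (S \<inter> T) x) y"
    using assms by (simp add: E_inner_commute)
  finally show ?thesis .
qed

lemma inner_E_E_Compl: "S \<in> sets borel \<Longrightarrow> inner (E S x) (E (-S) y) = 0"
  by (simp add: inner_E_E)

lemma norm_E_squared: "S \<in> sets borel \<Longrightarrow> (norm (E S x))\<^sup>2 = inner (E S x) x"
  by (simp add: power2_norm_eq_inner inner_E_E)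

lemma E_commute:
  assumes "S \<in> sets borel" "T \<in> sets borel"
  shows "E T (E S x) = E S (E T x)"
  using assms by (metis E_Int Int_commute)

lemma norm_E_E_add_E_Compl:
  assumes "S \<in> sets borel" "T \<in> sets borel"
  shows "norm (E T (E S x + E (-S) y)) = norm (E T (E S x - E (-S) y))"
proof -
  have "inner (E T (E S x)) (E T (E (-S) y)) = 0"
    using assms inner_E_E_Compl[of S "E T x" "E T y"]
    by (simp add: E_commute[of S T] E_commute[of "-S" T])
  thus ?thesis
    using assms by (simp add: E_add E_diff norm_add_eq_norm_diff_if_orthogonal)
qed

lemma countably_additive_norm_E:
  "countably_additive (sets borel) (\<lambda>S. ennreal ((norm (E S x))\<^sup>2))"
proof (rule countably_additiveI)
  fix F :: "nat \<Rightarrow> real set"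
  assume F: "range F \<subseteq> sets borel" "disjoint_family F"
  have "(\<lambda>n. inner (\<Sum>i<n. E (F i) x) x) \<longlonglongrightarrow> inner (E (\<Union>n. F n) x) x"
    using E_sums[OF F, of x] unfolding sums_def by (intro tendsto_intros)
  hence "(\<lambda>n. (norm (E (F n) x))\<^sup>2) sums (norm (E (\<Union>n. F n) x))\<^sup>2"
    unfolding sums_def using F(1)
    by (subst norm_E_squared, force, subst norm_E_squared, force)+ (simp add: inner_sum_left)
  thus "(\<Sum>i. ennreal ((norm (E (F i) x))\<^sup>2)) = ennreal ((norm (E (\<Union>i. F i) x))\<^sup>2)"
    by (simp add: suminf_ennreal2 sums_summable sums_unique[symmetric])
qed

lemma sets_spec_meas [measurable_cong]: "sets (spec_meas E x) = sets borel"
  unfolding spec_meas_def using sets.sigma_sets_eq[of borel] by (simp add: sets_measure_of_conv)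

lemma space_spec_meas [simp]: "space (spec_meas E x) = UNIV"
  using sets_eq_imp_space_eq[OF sets_spec_meas] by simp

lemma emeasure_spec_meas:
  "S \<in> sets borel \<Longrightarrow> emeasure (spec_meas E x) S = ennreal ((norm (E S x))\<^sup>2)"
  unfolding spec_meas_def
  by (rule emeasure_measure_of_sigma)
    (use sets.sigma_algebra_axioms[of borel] in \<open>simp_all add: positive_def countably_additive_norm_E\<close>)

lemma finite_measure_spec_meas: "finite_measure (spec_meas E x)"
  by (rule finite_measureI) (simp add: emeasure_spec_meas)

lemma measure_spec_meas_UNIV: "measure (spec_meas E x) UNIV = (norm x)\<^sup>2"
  by (simp add: measure_def emeasure_spec_meas)

lemma spec_meas_eqI:
  assumes "\<And>S. S \<in> sets borel \<Longrightarrow> norm (E S x) = norm (E S y)"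
  shows "spec_meas E x = spec_meas E y"
  by (rule measure_eqI) (simp_all add: sets_spec_meas emeasure_spec_meas assms)

lemma null_set_spec_meas:
  "S \<in> sets borel \<Longrightarrow> E S x = 0 \<Longrightarrow> S \<in> null_sets (spec_meas E x)"
  by (simp add: null_sets_def sets_spec_meas emeasure_spec_meas)

lemma AE_spec_meas_support:
  assumes "S \<in> sets borel" "E S u = u"
  shows "AE \<mu> in spec_meas E u. \<mu> \<in> S"
proof -
  have "E (-S) u = 0"
    using assms E_Int[of "-S" S u] by simp
  hence "-S \<in> null_sets (spec_meas E u)" using assms by (simp add: null_set_spec_meas)
  thus ?thesis by (rule AE_I') auto
qed

lemma spec_meas_E:
  assumes "S \<in> sets borel"
  shows "spec_meas E (E S x) = density (spec_meas E x) (\<lambda>\<mu>. ennreal (indicator S \<mu>))"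
proof (rule measure_eqI)
  fix T assume "T \<in> sets (spec_meas E (E S x))"
  hence T: "T \<in> sets borel" by (simp add: sets_spec_meas)
  have "emeasure (density (spec_meas E x) (\<lambda>\<mu>. ennreal (indicator S \<mu>))) T
      = (\<integral>\<^sup>+\<mu>. ennreal (indicator S \<mu>) * indicator T \<mu> \<partial>spec_meas E x)"
    using T assms by (subst emeasure_density) (auto simp: sets_spec_meas)
  also have "\<dots> = (\<integral>\<^sup>+\<mu>. indicator (T \<inter> S) \<mu> \<partial>spec_meas E x)"
    by (rule nn_integral_cong) (auto simp: indicator_def)
  also have "\<dots> = emeasure (spec_meas E x) (T \<inter> S)"
    using T assms by (subst nn_integral_indicator) (auto simp: sets_spec_meas)
  also have "\<dots> = emeasure (spec_meas E (E S x)) T"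
    using T assms by (simp add: sets_spec_meas emeasure_spec_meas E_Int)
  finally show "emeasure (spec_meas E (E S x)) T
      = emeasure (density (spec_meas E x) (\<lambda>\<mu>. ennreal (indicator S \<mu>))) T"
    by simp
qed (simp add: sets_spec_meas)

lemma spec_meas_scaleR: "spec_meas E (r *\<^sub>R x) = density (spec_meas E x) (\<lambda>_. ennreal (r\<^sup>2))"
proof (rule measure_eqI)
  fix T assume "T \<in> sets (spec_meas E (r *\<^sub>R x))"
  thus "emeasure (spec_meas E (r *\<^sub>R x)) T = emeasure (density (spec_meas E x) (\<lambda>_. ennreal (r\<^sup>2))) T"
    by (simp add: emeasure_density_const sets_spec_meas emeasure_spec_meas E_scaleR
        ennreal_mult[symmetric] power_mult_distrib)
qed (simp add: sets_spec_meas)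

lemma integral_spec_meas_scaleR:
  "integral\<^sup>L (spec_meas E (r *\<^sub>R x)) (\<lambda>\<mu>. \<mu>) = r\<^sup>2 * integral\<^sup>L (spec_meas E x) (\<lambda>\<mu>. \<mu>)"
  unfolding spec_meas_scaleR by (subst integral_density) auto

lemma spec_meas_E_add_E_Compl:
  "S \<in> sets borel \<Longrightarrow> spec_meas E (E S x + E (-S) y) = spec_meas E (E S x - E (-S) y)"
  by (rule spec_meas_eqI) (rule norm_E_E_add_E_Compl)

lemma spec_meas_E_Compl_diff_E:
  assumes "S \<in> sets borel"
  shows "spec_meas E (E (-S) x - E S x) = spec_meas E x"
proof -
  have "spec_meas E (E (-S) x - E S x) = spec_meas E (E S x - E (-S) x)"
    by (rule spec_meas_eqI) (simp add: E_diff norm_minus_commute)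
  also have "\<dots> = spec_meas E x"
    using spec_meas_E_add_E_Compl[OF assms, of x x] by (simp add: E_add_E_Compl[OF assms])
  finally show ?thesis .
qed

lemma spec_form_diag: "spec_form E v v = integral\<^sup>L (spec_meas E v) (\<lambda>\<mu>. \<mu>)"
  using integral_spec_meas_scaleR[of 2 v] integral_spec_meas_scaleR[of 0 v]
  by (simp add: spec_form_def scaleR_2)

lemma spec_form_E_E_Compl: "S \<in> sets borel \<Longrightarrow> spec_form E (E S x) (E (-S) y) = 0"
  by (simp add: spec_form_def spec_meas_E_add_E_Compl)

lemma spec_form_E_Compl_diff_E:
  assumes "S \<in> sets borel"
  shows "spec_form E x (E (-S) x - E S x)
       = spec_form E (E (-S) x) (E (-S) x) - spec_form E (E S x) (E S x)"
proof -
  have x: "x = E S x + E (-S) x" using E_add_E_Compl[OF assms] by simp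
  have "x + (E (-S) x - E S x) = 2 *\<^sub>R E (-S) x" "x - (E (-S) x - E S x) = 2 *\<^sub>R E S x"
    by (subst (1) x, simp add: scaleR_2)+
  hence "spec_form E x (E (-S) x - E S x) = (integral\<^sup>L (spec_meas E (2 *\<^sub>R E (-S) x)) (\<lambda>\<mu>. \<mu>)
      - integral\<^sup>L (spec_meas E (2 *\<^sub>R E S x)) (\<lambda>\<mu>. \<mu>)) / 4"
    unfolding spec_form_def by simp
  thus ?thesis by (simp only: integral_spec_meas_scaleR spec_form_diag) simp
qed

lemma form_dom_E:
  assumes "x \<in> form_dom E" "S \<in> sets borel"
  shows "E S x \<in> form_dom E"
proof -
  have "integrable (spec_meas E x) (\<lambda>\<mu>. indicator S \<mu> *\<^sub>R \<bar>\<mu>\<bar>)"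
    using assms by (intro integrable_mult_indicator) (auto simp: form_dom_def sets_spec_meas)
  thus ?thesis
    unfolding form_dom_def mem_Collect_eq spec_meas_E[OF assms(2)]
    using assms(2) by (subst integrable_density) (auto simp: sets_spec_meas)
qed

lemma form_dom_E_Compl_diff_E:
  "x \<in> form_dom E \<Longrightarrow> S \<in> sets borel \<Longrightarrow> E (-S) x - E S x \<in> form_dom E"
  by (simp add: form_dom_def spec_meas_E_Compl_diff_E)

lemma integrable_spec_meas_bounded_on_support:
  fixes f :: "real \<Rightarrow> real"
  assumes "S \<in> sets borel" "E S u = u"
    and "f \<in> borel_measurable borel" "\<And>\<mu>. \<mu> \<in> S \<Longrightarrow> \<bar>f \<mu>\<bar> \<le> B"
  shows "integrable (spec_meas E u) f"
proof (rule finite_measure.integrable_const_bound[OF finite_measure_spec_meas, where B=B])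
  show "AE \<mu> in spec_meas E u. norm (f \<mu>) \<le> B"
    using AE_spec_meas_support[OF assms(1,2)] by eventually_elim (simp add: assms(4))
qed (use assms in simp)

lemma form_dom_if_square_integrable:
  assumes "integrable (spec_meas E x) (\<lambda>\<mu>. \<mu>\<^sup>2)"
  shows "x \<in> form_dom E"
  unfolding form_dom_def mem_Collect_eq
proof (rule Bochner_Integration.integrable_bound)
  show "integrable (spec_meas E x) (\<lambda>\<mu>. 1 + \<mu>\<^sup>2)"
    using finite_measure.integrable_const[OF finite_measure_spec_meas] assms
    by (rule Bochner_Integration.integrable_add)
  have "\<bar>\<mu>\<bar> \<le> 1 + \<mu>\<^sup>2" for \<mu> :: real
  proof -
    have "0 \<le> (\<bar>\<mu>\<bar> - 1)\<^sup>2" by simp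
    thus ?thesis by (simp add: power2_diff)
  qed
  thus "AE \<mu> in spec_meas E x. norm \<bar>\<mu>\<bar> \<le> norm (1 + \<mu>\<^sup>2)"
    by (intro AE_I2) (simp add: add_nonneg_nonneg)
qed simp

lemma integrable_spec_meas_if_form_dom:
  "v \<in> form_dom E \<Longrightarrow> integrable (spec_meas E v) (\<lambda>\<mu>. \<mu>)"
  using integrable_abs_iff[of "\<lambda>\<mu>. \<mu>" "spec_meas E v"] unfolding form_dom_def by simp

lemma spec_form_le:
  assumes "v \<in> form_dom E" "AE \<mu> in spec_meas E v. \<mu> \<le> a"
  shows "spec_form E v v \<le> a * (norm v)\<^sup>2"
proof -
  have "integral\<^sup>L (spec_meas E v) (\<lambda>\<mu>. \<mu>) \<le> integral\<^sup>L (spec_meas E v) (\<lambda>\<mu>. a)"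
    using assms integrable_spec_meas_if_form_dom finite_measure.integrable_const[OF finite_measure_spec_meas]
    by (intro integral_mono_AE) auto
  thus ?thesis by (simp add: spec_form_diag measure_spec_meas_UNIV mult.commute)
qed

lemma spec_form_ge:
  assumes "v \<in> form_dom E" "AE \<mu> in spec_meas E v. a \<le> \<mu>"
  shows "a * (norm v)\<^sup>2 \<le> spec_form E v v"
proof -
  have "integral\<^sup>L (spec_meas E v) (\<lambda>\<mu>. a) \<le> integral\<^sup>L (spec_meas E v) (\<lambda>\<mu>. \<mu>)"
    using assms integrable_spec_meas_if_form_dom finite_measure.integrable_const[OF finite_measure_spec_meas]
    by (intro integral_mono_AE) auto
  thus ?thesis by (simp add: spec_form_diag measure_spec_meas_UNIV mult.commute)
qed

lemma spec_form_diag_near_point: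
  assumes J: "J = {l-\<epsilon><..<l+\<epsilon>}" and u: "E J u = u"
  shows "\<bar>spec_form E u u - l * (norm u)\<^sup>2\<bar> \<le> \<epsilon> * (norm u)\<^sup>2"
proof -
  have Jb: "J \<in> sets borel" using J by simp
  have fd: "u \<in> form_dom E" unfolding form_dom_def mem_Collect_eq
    by (rule integrable_spec_meas_bounded_on_support[OF Jb u, where B="\<bar>l\<bar> + \<bar>\<epsilon>\<bar>"]) (auto simp: J)
  have ae: "AE \<mu> in spec_meas E u. \<mu> \<in> J" by (rule AE_spec_meas_support[OF Jb u])
  have "spec_form E u u \<le> (l + \<epsilon>) * (norm u)\<^sup>2"
    using ae by (intro spec_form_le[OF fd]) (auto simp: J elim: eventually_mono)
  moreover have "(l - \<epsilon>) * (norm u)\<^sup>2 \<le> spec_form E u u"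
    using ae by (intro spec_form_ge[OF fd]) (auto simp: J elim: eventually_mono)
  ultimately show ?thesis by (simp add: algebra_simps abs_le_iff)
qed

lemma spec_form_near_point:
  assumes J: "J = {l-\<epsilon><..<l+\<epsilon>}" and v: "E J v = v" and w: "E J w = w"
  shows "spec_form E v w - l * inner v w \<le> \<epsilon> * ((norm v)\<^sup>2 + (norm w)\<^sup>2) / 2"
proof -
  have "E J (v + w) = v + w" "E J (v - w) = v - w"
    using J v w by (simp_all add: E_add E_diff)
  hence "\<bar>spec_form E (v + w) (v + w) - l * (norm (v + w))\<^sup>2\<bar> \<le> \<epsilon> * (norm (v + w))\<^sup>2"
    and "\<bar>spec_form E (v - w) (v - w) - l * (norm (v - w))\<^sup>2\<bar> \<le> \<epsilon> * (norm (v - w))\<^sup>2"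
    using spec_form_diag_near_point[OF J] by blast+
  moreover have "4 * (l * inner v w) = l * (norm (v + w))\<^sup>2 - l * (norm (v - w))\<^sup>2"
    by (simp add: norm_add_squared norm_diff_squared algebra_simps)
  moreover have "4 * spec_form E v w = spec_form E (v + w) (v + w) - spec_form E (v - w) (v - w)"
    by (simp only: spec_form_diag) (simp add: spec_form_def)
  moreover have "\<epsilon> * (norm (v + w))\<^sup>2 + \<epsilon> * (norm (v - w))\<^sup>2 = 2 * \<epsilon> * ((norm v)\<^sup>2 + (norm w)\<^sup>2)"
  proof -
    have "\<epsilon> * ((norm (v + w))\<^sup>2 + (norm (v - w))\<^sup>2) = \<epsilon> * (2 * (norm v)\<^sup>2 + 2 * (norm w)\<^sup>2)"
      by (simp only: parallelogram_law)
    thus ?thesis by (simp add: algebra_simps)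
  qed
  ultimately show ?thesis unfolding abs_le_iff by linarith
qed

lemma E_operator_invariant:
  assumes sm: "spectral_measure_of E D A" and dense: "closure D = UNIV"
    and S: "S \<in> sets borel" and z: "z \<in> D" "E S z = z"
  shows "E S (A z) = A z"
proof -
  have D: "D = {x. integrable (spec_meas E x) (\<lambda>\<mu>. \<mu>\<^sup>2)}"
    and A: "\<forall>x\<in>D. \<forall>y\<in>form_dom E. inner (A x) y = spec_form E x y"
    using sm by (auto simp: spectral_measure_of_def)
  have S': "-S \<in> sets borel" using S by simp
  have "E (-S) (A z) = 0"
  proof (rule dense_orthogonal_eq_0[OF dense])
    fix w assume "w \<in> D"
    hence "E (-S) w \<in> form_dom E"
      using D S' form_dom_E form_dom_if_square_integrable by blast
    hence "inner (A z) (E (-S) w) = spec_form E (E S z) (E (-S) w)"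
      using A z by simp
    thus "inner (E (-S) (A z)) w = 0"
      by (simp add: E_inner_commute[OF S'] spec_form_E_E_Compl[OF S])
  qed
  thus ?thesis using E_add_E_Compl[OF S, of "A z"] by simp
qed

lemma E_interval_eq_0_near_resolvent_point:
  assumes sm: "spectral_measure_of E D A" and dense: "closure D = UNIV"
    and K: "\<forall>x\<in>D. norm x \<le> K * norm (A x - l *\<^sub>R x)"
    and \<epsilon>: "0 < \<epsilon>" "\<epsilon> \<le> 1" "K\<^sup>2 * \<epsilon> < 1"
  shows "E {l-\<epsilon><..<l+\<epsilon>} x = 0"
proof -
  define J where "J = {l-\<epsilon><..<l+\<epsilon>}"
  have J: "J \<in> sets borel" by (simp add: J_def)
  have D: "D = {x. integrable (spec_meas E x) (\<lambda>\<mu>. \<mu>\<^sup>2)}"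
    and A: "\<forall>x\<in>D. \<forall>y\<in>form_dom E. inner (A x) y = spec_form E x y"
    using sm by (auto simp: spectral_measure_of_def)
  define z where "z = E J x"
  have zJ: "E J z = z" unfolding z_def by (rule E_idem[OF J(1)])
  have zD: "z \<in> D" unfolding D mem_Collect_eq
  proof (rule integrable_spec_meas_bounded_on_support[OF J(1) zJ, where B="(\<bar>l\<bar> + 1)\<^sup>2"])
    fix \<mu> assume "\<mu> \<in> J"
    hence "\<bar>\<mu>\<bar> \<le> \<bar>l\<bar> + 1" using \<epsilon> by (auto simp: J_def)
    hence "\<bar>\<mu>\<bar>\<^sup>2 \<le> (\<bar>l\<bar> + 1)\<^sup>2" by (rule power_mono) simp
    thus "\<bar>\<mu>\<^sup>2\<bar> \<le> (\<bar>l\<bar> + 1)\<^sup>2" by simp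
  qed simp
  define u where "u = A z - l *\<^sub>R z"
  have uJ: "E J u = u"
    using E_operator_invariant[OF sm dense J(1) zD zJ] zJ J(1) by (simp add: u_def E_diff E_scaleR)
  have "u \<in> form_dom E"
    unfolding form_dom_def mem_Collect_eq
    by (rule integrable_spec_meas_bounded_on_support[OF J(1) uJ, where B="\<bar>l\<bar> + 1"])
      (use \<epsilon> in \<open>auto simp: J_def\<close>)
  have "(norm u)\<^sup>2 = spec_form E z u - l * inner z u"
    using A zD \<open>u \<in> form_dom E\<close> by (simp add: u_def power2_norm_eq_inner inner_diff_left)
  also have "\<dots> \<le> \<epsilon> * ((norm z)\<^sup>2 + (norm u)\<^sup>2) / 2"
    by (rule spec_form_near_point[OF J_def zJ uJ])
  finally have "(norm u)\<^sup>2 \<le> \<epsilon> * (norm z)\<^sup>2"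
    using \<epsilon>(2) mult_right_mono[OF \<epsilon>(2), of "(norm u)\<^sup>2"] by (simp add: field_simps)
  hence "K\<^sup>2 * (norm u)\<^sup>2 \<le> K\<^sup>2 * \<epsilon> * (norm z)\<^sup>2"
    by (simp add: mult_left_mono mult.assoc)
  moreover have "(norm z)\<^sup>2 \<le> K\<^sup>2 * (norm u)\<^sup>2"
    using K zD by (simp add: u_def power_mult_distrib[symmetric] power_mono)
  ultimately have "(norm z)\<^sup>2 \<le> (K\<^sup>2 * \<epsilon>) * (norm z)\<^sup>2" by linarith
  hence "norm z = 0"
    using \<epsilon>(3) mult_less_cancel_right_pos[of "(norm z)\<^sup>2" "K\<^sup>2 * \<epsilon>" 1] by fastforce
  thus ?thesis by (simp add: z_def J_def)
qed

lemma E_vanishes_near_resolvent_point: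
  assumes sm: "spectral_measure_of E D A" and dense: "closure D = UNIV"
    and l: "l \<in> real_resolvent_set D A" and r: "0 < r"
  obtains \<epsilon> where "0 < \<epsilon>" "\<epsilon> \<le> r" "\<And>x. E {l-\<epsilon><..<l+\<epsilon>} x = 0"
proof -
  obtain K where K: "\<forall>x\<in>D. norm x \<le> K * norm (A x - l *\<^sub>R x)"
    using l unfolding real_resolvent_set_def by blast
  define \<epsilon> where "\<epsilon> = min (min r 1) (1 / (2 * (K\<^sup>2 + 1)))"
  have pos: "0 < 2 * (K\<^sup>2 + 1)" by (smt (verit) zero_le_power2)
  have \<epsilon>: "0 < \<epsilon>" "\<epsilon> \<le> 1" "\<epsilon> \<le> r"
    using r pos unfolding \<epsilon>_def by (simp_all add: min_le_iff_disj)
  have "K\<^sup>2 * \<epsilon> \<le> K\<^sup>2 / (2 * (K\<^sup>2 + 1))"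
    using mult_left_mono[of \<epsilon> "1 / (2 * (K\<^sup>2 + 1))" "K\<^sup>2"] by (simp add: \<epsilon>_def)
  also have "\<dots> < 1" using pos by (simp add: divide_less_eq)
  finally have "K\<^sup>2 * \<epsilon> < 1" .
  with \<epsilon> show ?thesis
    using that E_interval_eq_0_near_resolvent_point[OF sm dense K] by blast
qed

lemma E_resolvent_interval_eq_0:
  assumes sm: "spectral_measure_of E D A" and dense: "closure D = UNIV"
    and gap: "{\<alpha><..<\<beta>} \<subseteq> real_resolvent_set D A"
  shows "E {\<alpha><..<\<beta>} x = 0"
proof -
  define F where "F = {I. open I \<and> I \<subseteq> {\<alpha><..<\<beta>} \<and> (\<forall>x. E I x = 0)}"
  have "\<exists>I\<in>F. l \<in> I" if l: "l \<in> {\<alpha><..<\<beta>}" for l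
  proof -
    have "l \<in> real_resolvent_set D A" "0 < min (l - \<alpha>) (\<beta> - l)" using l gap by auto
    then obtain \<epsilon> where \<epsilon>: "0 < \<epsilon>" "\<epsilon> \<le> min (l - \<alpha>) (\<beta> - l)" "\<And>x. E {l-\<epsilon><..<l+\<epsilon>} x = 0"
      using E_vanishes_near_resolvent_point[OF sm dense] by blast
    hence "{l-\<epsilon><..<l+\<epsilon>} \<in> F" unfolding F_def by auto
    thus ?thesis using \<epsilon>(1) by (intro bexI[of _ "{l-\<epsilon><..<l+\<epsilon>}"]) auto
  qed
  hence UF: "\<Union>F = {\<alpha><..<\<beta>}" unfolding F_def by blast
  obtain F' where F': "F' \<subseteq> F" "countable F'" "\<Union>F' = \<Union>F"
    using Lindelof[of F] unfolding F_def by blast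
  have "I \<in> null_sets (spec_meas E x)" if "I \<in> F'" for I
    using that F'(1) by (intro null_set_spec_meas) (auto simp: F_def)
  hence "\<Union>F' \<in> null_sets (spec_meas E x)" using null_sets_UN'[OF F'(2), of "\<lambda>I. I"] by simp
  hence "emeasure (spec_meas E x) {\<alpha><..<\<beta>} = 0" using F'(3) UF by auto
  thus ?thesis by (simp add: emeasure_spec_meas)
qed

lemma spec_form_below_le:
  "v \<in> form_dom E \<Longrightarrow> spec_form E (E {..\<alpha>} v) (E {..\<alpha>} v) \<le> \<alpha> * (norm (E {..\<alpha>} v))\<^sup>2"
  using AE_spec_meas_support[of "{..\<alpha>}" "E {..\<alpha>} v"]
  by (intro spec_form_le form_dom_E) (auto simp: E_idem)

lemma spec_form_above_ge:
  assumes "v \<in> form_dom E" and gap: "\<And>w. E {\<alpha><..<\<beta>} w = 0"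
  shows "\<beta> * (norm (E {\<alpha><..} v))\<^sup>2 \<le> spec_form E (E {\<alpha><..} v) (E {\<alpha><..} v)"
proof (rule spec_form_ge)
  let ?u = "E {\<alpha><..} v"
  show "?u \<in> form_dom E" using assms(1) by (simp add: form_dom_E)
  have "AE \<mu> in spec_meas E ?u. \<mu> \<in> {\<alpha><..}" by (rule AE_spec_meas_support) (simp_all add: E_idem)
  moreover have "{\<alpha><..<\<beta>} \<in> null_sets (spec_meas E ?u)" using gap by (simp add: null_set_spec_meas)
  hence "AE \<mu> in spec_meas E ?u. \<mu> \<notin> {\<alpha><..<\<beta>}" by (rule AE_I') auto
  ultimately show "AE \<mu> in spec_meas E ?u. \<beta> \<le> \<mu>" by eventually_elim auto
qed

end

lemma inner_perturbed_shift_ge: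
  fixes E EC :: "real set \<Rightarrow> 'a::real_inner \<Rightarrow> 'a"
  assumes "pvm E" and smC: "spectral_measure_of EC DC C"
    and b: "nonneg_form Db b" "form_dom E \<subseteq> Db"
    and dom: "form_dom EC = form_dom E"
    and form: "\<forall>x\<in>form_dom E. \<forall>y\<in>form_dom E. spec_form EC x y = spec_form E x y + b x y"
    and "d \<ge> 0"
    and bound: "\<forall>x\<in>form_dom E. b x x \<le> c * (norm x)\<^sup>2 + d * spec_form E x x"
    and gap: "\<And>w. E {\<alpha><..<\<beta>} w = 0"
    and x: "x \<in> DC"
  shows "(l - (\<alpha> + c + d * \<alpha>)) * (norm (E {..\<alpha>} x))\<^sup>2 + (\<beta> - l) * (norm (E {\<alpha><..} x))\<^sup>2
         \<le> inner (C x - l *\<^sub>R x) (E {\<alpha><..} x - E {..\<alpha>} x)"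
proof -
  interpret E: projection_valued_measure E by unfold_locales fact
  interpret EC: projection_valued_measure EC
    using smC by unfold_locales (simp add: spectral_measure_of_def)
  have DC: "DC = {x. integrable (spec_meas EC x) (\<lambda>\<mu>. \<mu>\<^sup>2)}"
    and C: "\<forall>x\<in>DC. \<forall>y\<in>form_dom EC. inner (C x) y = spec_form EC x y"
    using smC by (auto simp: spectral_measure_of_def)
  define x1 where "x1 = E {..\<alpha>} x"
  define x2 where "x2 = E {\<alpha><..} x"
  have S: "{..\<alpha>} \<in> sets borel" by simp
  have "x \<in> form_dom E" using x DC dom EC.form_dom_if_square_integrable by blast
  hence fd: "x1 \<in> form_dom E" "x2 \<in> form_dom E" "x2 - x1 \<in> form_dom E"
    using E.form_dom_E E.form_dom_E_Compl_diff_E[OF _ S] by (simp_all add: x1_def x2_def)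
  have x12: "x = x1 + x2" using E.E_add_E_Compl[OF S] by (simp add: x1_def x2_def)
  have orth: "inner x1 x2 = 0" using E.inner_E_E_Compl[OF S] by (simp add: x1_def x2_def)
  have "inner (C x) (x2 - x1) = spec_form E x (x2 - x1) + b x (x2 - x1)"
    using C form x fd dom \<open>x \<in> form_dom E\<close> by simp
  also have "spec_form E x (x2 - x1) = spec_form E x2 x2 - spec_form E x1 x1"
    using E.spec_form_E_Compl_diff_E[OF S] by (simp add: x1_def x2_def)
  also have "b x (x2 - x1) = b x2 x2 - b x1 x1"
    using nonneg_form_add_diff[OF b(1)] fd b(2) x12 by auto
  finally have Cx: "inner (C x) (x2 - x1)
      = spec_form E x2 x2 - spec_form E x1 x1 + (b x2 x2 - b x1 x1)" .
  have "inner x (x2 - x1) = (norm x2)\<^sup>2 - (norm x1)\<^sup>2"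
    by (subst x12) (rule inner_add_diff_orthogonal[OF orth])
  hence lx: "inner (C x - l *\<^sub>R x) (x2 - x1) = inner (C x) (x2 - x1) - l * ((norm x2)\<^sup>2 - (norm x1)\<^sup>2)"
    by (simp add: inner_diff_left)
  have a1: "spec_form E x1 x1 \<le> \<alpha> * (norm x1)\<^sup>2"
    using E.spec_form_below_le \<open>x \<in> form_dom E\<close> by (simp add: x1_def)
  have "\<beta> * (norm x2)\<^sup>2 \<le> spec_form E x2 x2"
    using E.spec_form_above_ge \<open>x \<in> form_dom E\<close> gap by (simp add: x2_def)
  moreover have "b x1 x1 \<le> c * (norm x1)\<^sup>2 + d * (\<alpha> * (norm x1)\<^sup>2)"
    using bound fd(1) mult_left_mono[OF a1 \<open>d \<ge> 0\<close>] by fastforce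
  moreover have "0 \<le> b x2 x2" using b fd by (auto simp: nonneg_form_def)
  ultimately show ?thesis
    using a1 unfolding x1_def[symmetric] x2_def[symmetric] lx Cx by (simp add: algebra_simps)
qed

lemma perturbed_shift_bounded_below:
  fixes E EC :: "real set \<Rightarrow> 'a::real_inner \<Rightarrow> 'a"
  assumes "pvm E" and "spectral_measure_of EC DC C"
    and "nonneg_form Db b" "form_dom E \<subseteq> Db"
    and "form_dom EC = form_dom E"
    and "\<forall>x\<in>form_dom E. \<forall>y\<in>form_dom E. spec_form EC x y = spec_form E x y + b x y"
    and "d \<ge> 0"
    and "\<forall>x\<in>form_dom E. b x x \<le> c * (norm x)\<^sup>2 + d * spec_form E x x"
    and "\<And>w. E {\<alpha><..<\<beta>} w = 0"
    and \<kappa>: "\<kappa> \<le> l - (\<alpha> + c + d * \<alpha>)" "\<kappa> \<le> \<beta> - l"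
    and x: "x \<in> DC"
  shows "\<kappa> * norm x \<le> norm (C x - l *\<^sub>R x)"
proof -
  interpret E: projection_valued_measure E by unfold_locales fact
  define x1 where "x1 = E {..\<alpha>} x"
  define x2 where "x2 = E {\<alpha><..} x"
  have x12: "x = x1 + x2" using E.E_add_E_Compl[of "{..\<alpha>}"] by (simp add: x1_def x2_def)
  have orth: "inner x1 x2 = 0" using E.inner_E_E_Compl[of "{..\<alpha>}"] by (simp add: x1_def x2_def)
  have norm_x: "(norm x)\<^sup>2 = (norm x1)\<^sup>2 + (norm x2)\<^sup>2"
    using orth by (simp add: x12 norm_add_squared)
  have norm_diff: "norm (x2 - x1) = norm x"
    using norm_add_eq_norm_diff_if_orthogonal[OF orth] by (simp add: x12 norm_minus_commute)
  have "\<kappa> * (norm x)\<^sup>2 \<le> (l - (\<alpha> + c + d * \<alpha>)) * (norm x1)\<^sup>2 + (\<beta> - l) * (norm x2)\<^sup>2"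
    unfolding norm_x distrib_left using \<kappa> by (intro add_mono mult_right_mono) auto
  also have "\<dots> \<le> inner (C x - l *\<^sub>R x) (x2 - x1)"
    unfolding x1_def x2_def by (rule inner_perturbed_shift_ge[OF assms(1-9) x])
  also have "\<dots> \<le> norm (C x - l *\<^sub>R x) * norm x"
    using norm_cauchy_schwarz norm_diff by metis
  finally have "(\<kappa> * norm x) * norm x \<le> norm (C x - l *\<^sub>R x) * norm x"
    by (simp add: power2_eq_square mult.assoc)
  thus ?thesis by (cases "x = 0") (auto simp: mult_le_cancel_right)
qed

theorem theorem3p2:
  fixes D DC :: "'a::{real_inner, complete_space} set"
    and A C :: "'a \<Rightarrow> 'a"
    and E EC :: "real set \<Rightarrow> 'a \<Rightarrow> 'a"
    and Db :: "'a set" and b :: "'a \<Rightarrow> 'a \<Rightarrow> real"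
    and \<alpha> \<beta> c d :: real
  assumes "self_adjoint D A" and "spectral_measure_of E D A"
    and "{\<alpha><..<\<beta>} \<subseteq> real_resolvent_set D A"
    and "nonneg_form Db b" and "form_dom E \<subseteq> Db"
    and "self_adjoint DC C" and "spectral_measure_of EC DC C"
    and "form_dom EC = form_dom E"
    and "\<forall>x\<in>form_dom E. \<forall>y\<in>form_dom E. spec_form EC x y = spec_form E x y + b x y"
    and "c \<ge> 0" and "d \<ge> 0"
    and "\<forall>x\<in>form_dom E. b x x \<le> c * (norm x)\<^sup>2 + d * spec_form E x x"
    and "\<alpha> + c + d * \<alpha> < \<beta>"
  shows "{\<alpha> + c + d * \<alpha><..<\<beta>} \<subseteq> real_resolvent_set DC C"
proof
  have pvm: "pvm E" using assms(2) by (simp add: spectral_measure_of_def)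
  have gap: "E {\<alpha><..<\<beta>} w = 0" for w
    using projection_valued_measure.E_resolvent_interval_eq_0[OF _ assms(2) _ assms(3)] pvm assms(1)
    by (simp add: projection_valued_measure_def self_adjoint_def)
  fix l assume l: "l \<in> {\<alpha> + c + d * \<alpha><..<\<beta>}"
  define \<kappa> where "\<kappa> = min (l - (\<alpha> + c + d * \<alpha>)) (\<beta> - l)"
  have "0 < \<kappa>" using l by (simp add: \<kappa>_def)
  have bounded_below: "\<kappa> * norm x \<le> norm (C x - l *\<^sub>R x)" if "x \<in> DC" for x
    by (rule perturbed_shift_bounded_below[OF pvm assms(7,4,5,8,9,11,12) gap _ _ that])
      (simp_all add: \<kappa>_def)
  hence "\<forall>x\<in>DC. norm x \<le> (1 / \<kappa>) * norm (C x - l *\<^sub>R x)"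
    using \<open>0 < \<kappa>\<close> by (simp add: field_simps)
  moreover have "bij_betw (\<lambda>x. C x - l *\<^sub>R x) DC UNIV"
    using assms(6) \<open>0 < \<kappa>\<close> bounded_below by (rule self_adjoint_bounded_below_bij)
  ultimately show "l \<in> real_resolvent_set DC C" unfolding real_resolvent_set_def by blast
qed

end
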